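(* Let $\rho\in\Delta_{|\mathcal S|}$ and let $\pi,\pi'$ be policies. Define $\underline L_{\rho,\pi'}(v):=\min_{x\in X(\rho,\pi')}L_{\rho,\pi'}(x,v)$, where $$L_{\rho,\pi'}(x,v):=\langle c,x\rangle+\sum_{s\in\mathcal S}\eta^{\pi'}_\rho(s)\,\bar h^{x(\cdot,s)}(s)+\langle v,\rho-(\hat I-\gamma P)^Tx\rangle .$$ Then, with $V^\pi\in\mathbb R^{|\mathcal S|}$ the value function of $\pi$, $$\underline L_{\rho,\pi'}(V^\pi)=\langle V^\pi,\rho\rangle-\sum_{s\in\mathcal S}\eta^{\pi'}_\rho(s)\cdot\max_{p\in\Delta_{|\mathcal A|}}\{-\psi^\pi(s,p)\}.$$
   Context: An infinite-horizon discounted MDP: finite $\mathcal S$, $\mathcal A$, transition probabilities $\mathcal P(s'\mid s,a)$, cost $c$, discount $\gamma\in[0,1)$. A policy assigns $\pi(\cdot\mid s)\in\Delta_{|\mathcal A|}$ (probability simplex) to each state. For each $s$, $p\mapsto h^p(s)$ is a closed convex function on $\Delta_{|\mathcal A|}$. $V^\pi(s)=\mathbb E[\sum_{t\ge0}\gamma^t(c(s_t,a_t)+h^{\pi(\cdot\mid s_t)}(s_t))\mid s_0=s,\ a_t\sim\pi(\cdot\mid s_t),\ s_{t+1}\sim\mathcal P(\cdot\mid s_t,a_t)]$, $Q^\pi(s,a)$ the same with $a_0=a$; the advantage function is $\psi^\pi(s,p):=\langle Q^\pi(s,\cdot),p\rangle-V^\pi(s)+h^p(s)-h^{\pi(\cdot\mid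 s)}(s)$. Visitation: $\kappa^\pi_q(s):=(1-\gamma)\sum_{t\ge0}\gamma^t\Pr^\pi\{s_t=s\mid s_0=q\}$ and $\eta^\pi_\rho(s):=(1-\gamma)^{-1}\sum_q\rho(q)\kappa^\pi_q(s)$. Vectors $x\in\mathbb R^{|\mathcal A|\times|\mathcal S|}$ have entries $x(a,s)$ and $\langle c,x\rangle=\sum_{s,a}c(s,a)x(a,s)$; $(\hat I-\gamma P)^Tx$ is the vector in $\mathbb R^{|\mathcal S|}$ with entries $\sum_a x(a,s)-\gamma\sum_{s',a}\mathcal P(s\mid s',a)x(a,s')$ (so $\langle v,(\hat I-\gamma P)^Tx\rangle=\sum_{s,a}x(a,s)[v(s)-\gamma\sum_{s'}\mathcal P(s'\mid s,a)v(s')]$). $X(\rho,\pi'):=\{x\ge0:\sum_{a}x(a,s)=\eta^{\pi'}_\rho(s)\ \forall s\}$. For $x\in X(\rho,\pi')$, $\bar h^{x(\cdot,s)}(s):=h^{u(\cdot,s)}(s)$ with $u(\cdot,s)=x(\cdot,s)/\sum_a x(a,s)$. *)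

theory Defs
  imports "HOL-Analysis.Analysis"
begin

(* Transition kernel  P s a s' = P(s' | s,a);  cost  c s a;
   regulariser  h s p = h^p(s)  for p in the action simplex;
   policy  pol s = pol(. | s) :: real^'a. *)

definition act_simplex :: "(real^'a::finite) set" where
  "act_simplex = {p. (\<forall>a. 0 \<le> p $ a) \<and> (\<Sum>a\<in>UNIV. p $ a) = 1}"

definition closed_fun_on :: "(real^'a::finite) set \<Rightarrow> (real^'a \<Rightarrow> real) \<Rightarrow> bool" where
  "closed_fun_on S f \<longleftrightarrow> closed {(p, t). p \<in> S \<and> f p \<le> t}"

definition is_policy :: "('s::finite \<Rightarrow> real^'a::finite) \<Rightarrow> bool" where
  "is_policy pol \<longleftrightarrow> (\<forall>s. pol s \<in> act_simplex)"

definition is_distribution :: "('s::finite \<Rightarrow> real) \<Rightarrow> bool" where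
  "is_distribution rho \<longleftrightarrow> (\<forall>s. 0 \<le> rho s) \<and> (\<Sum>s\<in>UNIV. rho s) = 1"

definition Ppol :: "('s::finite \<Rightarrow> 'a::finite \<Rightarrow> 's \<Rightarrow> real) \<Rightarrow> ('s \<Rightarrow> real^'a) \<Rightarrow> 's \<Rightarrow> 's \<Rightarrow> real" where
  "Ppol P pol s s' = (\<Sum>a\<in>UNIV. pol s $ a * P s a s')"

(* t-step probability  Pr^pol { s_t = s' | s_0 = s } *)
fun pstep :: "('s::finite \<Rightarrow> 'a::finite \<Rightarrow> 's \<Rightarrow> real) \<Rightarrow> ('s \<Rightarrow> real^'a) \<Rightarrow> nat \<Rightarrow> 's \<Rightarrow> 's \<Rightarrow> real" where
  "pstep P pol 0 s s' = (if s = s' then 1 else 0)"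
| "pstep P pol (Suc t) s s' = (\<Sum>s1\<in>UNIV. pstep P pol t s s1 * Ppol P pol s1 s')"

definition cpol :: "('s::finite \<Rightarrow> 'a::finite \<Rightarrow> real) \<Rightarrow> ('s \<Rightarrow> real^'a \<Rightarrow> real) \<Rightarrow> ('s \<Rightarrow> real^'a) \<Rightarrow> 's \<Rightarrow> real" where
  "cpol c h pol s = (\<Sum>a\<in>UNIV. pol s $ a * c s a) + h s (pol s)"

(* V^pol(s) = E[ sum_t gamma^t (c(s_t,a_t) + h^{pol(.|s_t)}(s_t)) | s_0 = s ] *)
definition Vfun :: "('s::finite \<Rightarrow> 'a::finite \<Rightarrow> 's \<Rightarrow> real) \<Rightarrow> ('s \<Rightarrow> 'a \<Rightarrow> real) \<Rightarrow> ('s \<Rightarrow> real^'a \<Rightarrow> real) \<Rightarrow> real \<Rightarrow> ('s \<Rightarrow> real^'a) \<Rightarrow> 's \<Rightarrow> real" where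
  "Vfun P c h \<gamma> pol s = (\<Sum>t. \<gamma> ^ t * (\<Sum>s'\<in>UNIV. pstep P pol t s s' * cpol c h pol s'))"

(* Q^pol(s,a): same with a_0 = a; for t >= 1,
   Pr{s_t = s' | s_0 = s, a_0 = a} = sum_{s1} P(s1|s,a) Pr^pol{s_{t-1} = s' | s_0 = s1} *)
definition Qfun :: "('s::finite \<Rightarrow> 'a::finite \<Rightarrow> 's \<Rightarrow> real) \<Rightarrow> ('s \<Rightarrow> 'a \<Rightarrow> real) \<Rightarrow> ('s \<Rightarrow> real^'a \<Rightarrow> real) \<Rightarrow> real \<Rightarrow> ('s \<Rightarrow> real^'a) \<Rightarrow> 's \<Rightarrow> 'a \<Rightarrow> real" where
  "Qfun P c h \<gamma> pol s a = c s a + h s (pol s) +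
     (\<Sum>t. \<gamma> ^ Suc t * (\<Sum>s'\<in>UNIV. (\<Sum>s1\<in>UNIV. P s a s1 * pstep P pol t s1 s') * cpol c h pol s'))"

definition psi :: "('s::finite \<Rightarrow> 'a::finite \<Rightarrow> 's \<Rightarrow> real) \<Rightarrow> ('s \<Rightarrow> 'a \<Rightarrow> real) \<Rightarrow> ('s \<Rightarrow> real^'a \<Rightarrow> real) \<Rightarrow> real \<Rightarrow> ('s \<Rightarrow> real^'a) \<Rightarrow> 's \<Rightarrow> real^'a \<Rightarrow> real" where
  "psi P c h \<gamma> pol s p = (\<Sum>a\<in>UNIV. Qfun P c h \<gamma> pol s a * p $ a) - Vfun P c h \<gamma> pol s + h s p - h s (pol s)"

definition kappa :: "('s::finite \<Rightarrow> 'a::finite \<Rightarrow> 's \<Rightarrow> real) \<Rightarrow> real \<Rightarrow> ('s \<Rightarrow> real^'a) \<Rightarrow> 's \<Rightarrow> 's \<Rightarrow> real" where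
  "kappa P \<gamma> pol q s = (1 - \<gamma>) * (\<Sum>t. \<gamma> ^ t * pstep P pol t q s)"

definition eta :: "('s::finite \<Rightarrow> 'a::finite \<Rightarrow> 's \<Rightarrow> real) \<Rightarrow> real \<Rightarrow> ('s \<Rightarrow> real^'a) \<Rightarrow> ('s \<Rightarrow> real) \<Rightarrow> 's \<Rightarrow> real" where
  "eta P \<gamma> pol rho s = inverse (1 - \<gamma>) * (\<Sum>q\<in>UNIV. rho q * kappa P \<gamma> pol q s)"

(* x(a,s) = x s $ a *)
definition Xset :: "('s::finite \<Rightarrow> 'a::finite \<Rightarrow> 's \<Rightarrow> real) \<Rightarrow> real \<Rightarrow> ('s \<Rightarrow> real) \<Rightarrow> ('s \<Rightarrow> real^'a) \<Rightarrow> ('s \<Rightarrow> real^'a) set" where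
  "Xset P \<gamma> rho pol' = {x. (\<forall>s a. 0 \<le> x s $ a) \<and> (\<forall>s. (\<Sum>a\<in>UNIV. x s $ a) = eta P \<gamma> pol' rho s)}"

definition hbar :: "('s \<Rightarrow> real^'a::finite \<Rightarrow> real) \<Rightarrow> ('s \<Rightarrow> real^'a) \<Rightarrow> 's \<Rightarrow> real" where
  "hbar h x s = h s (\<chi> a. x s $ a / (\<Sum>b\<in>UNIV. x s $ b))"

definition cx :: "('s::finite \<Rightarrow> 'a::finite \<Rightarrow> real) \<Rightarrow> ('s \<Rightarrow> real^'a) \<Rightarrow> real" where
  "cx c x = (\<Sum>s\<in>UNIV. \<Sum>a\<in>UNIV. c s a * x s $ a)"

(* (I^ - gamma P)^T x  as a vector on states *)
definition flowT :: "('s::finite \<Rightarrow> 'a::finite \<Rightarrow> 's \<Rightarrow> real) \<Rightarrow> real \<Rightarrow> ('s \<Rightarrow> real^'a) \<Rightarrow> 's \<Rightarrow> real" where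
  "flowT P \<gamma> x s = (\<Sum>a\<in>UNIV. x s $ a) - \<gamma> * (\<Sum>s'\<in>UNIV. \<Sum>a\<in>UNIV. P s' a s * x s' $ a)"

definition Lag :: "('s::finite \<Rightarrow> 'a::finite \<Rightarrow> 's \<Rightarrow> real) \<Rightarrow> ('s \<Rightarrow> 'a \<Rightarrow> real) \<Rightarrow> ('s \<Rightarrow> real^'a \<Rightarrow> real) \<Rightarrow> real \<Rightarrow> ('s \<Rightarrow> real) \<Rightarrow> ('s \<Rightarrow> real^'a) \<Rightarrow> ('s \<Rightarrow> real^'a) \<Rightarrow> ('s \<Rightarrow> real) \<Rightarrow> real" where
  "Lag P c h \<gamma> rho pol' x v = cx c x + (\<Sum>s\<in>UNIV. eta P \<gamma> pol' rho s * hbar h x s)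
      + (\<Sum>s\<in>UNIV. v s * (rho s - flowT P \<gamma> x s))"

definition Lunder :: "('s::finite \<Rightarrow> 'a::finite \<Rightarrow> 's \<Rightarrow> real) \<Rightarrow> ('s \<Rightarrow> 'a \<Rightarrow> real) \<Rightarrow> ('s \<Rightarrow> real^'a \<Rightarrow> real) \<Rightarrow> real \<Rightarrow> ('s \<Rightarrow> real) \<Rightarrow> ('s \<Rightarrow> real^'a) \<Rightarrow> ('s \<Rightarrow> real) \<Rightarrow> real" where
  "Lunder P c h \<gamma> rho pol' v = (INF x\<in>Xset P \<gamma> rho pol'. Lag P c h \<gamma> rho pol' x v)"

end

theory Submission
  imports Defs
begin

(* By the Bellman equation Q = c + h^pi + gamma P V^pi and the adjoint identity
   <v, (I - gamma P)^T x> = sum x(a,s) [v(s) - gamma (P v)(s,a)], the Lagrangian at v = V^pi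
   equals <V^pi, rho> + sum_s eta(s) psi^pi(s, u(.,s)) whenever x(.,s) = eta(s) u(.,s) with u a
   policy, and every x in X(rho,pi') has this form.  The minimisation over X(rho,pi') thus
   decouples into minimising psi^pi(s,.) over the simplex for each s.  These minima are attained:
   p |-> psi^pi(s,p) is p |-> h^p(s) plus a continuous function, so it has a closed epigraph over
   the compact simplex. *)

lemma closed_fun_on_iff_closed_epigraph: "closed_fun_on S f \<longleftrightarrow> closed (epigraph S f)"
  unfolding closed_fun_on_def epigraph_def by (simp add: case_prod_unfold)

lemma closed_epigraph_attains_min:
  fixes f :: "'b::topological_space \<Rightarrow> real"
  assumes closed: "closed (epigraph S f)" and "compact S" "S \<noteq> {}"
  obtains p where "p \<in> S" "\<And>q. q \<in> S \<Longrightarrow> f p \<le> f q"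
proof -
  define sublevel where "sublevel q = {p. (p, f q) \<in> epigraph S f}" for q
  have "S \<inter> \<Inter>(sublevel ` S) \<noteq> {}"
  proof (rule compact_imp_fip[OF \<open>compact S\<close>])
    show "closed F" if F: "F \<in> sublevel ` S" for F
    proof -
      obtain q where "F = (\<lambda>p. (p, f q)) -` epigraph S f"
        using F unfolding sublevel_def vimage_def by blast
      then show ?thesis
        by (simp only:) (rule closed_vimage[OF closed], intro continuous_intros)
    qed
    fix F' assume "finite F'" "F' \<subseteq> sublevel ` S"
    then obtain T where T: "T \<subseteq> S" "finite T" "F' = sublevel ` T"
      by (meson finite_subset_image)
    show "S \<inter> \<Inter>F' \<noteq> {}"
    proof (cases "T = {}")
      case False
      then obtain q0 where "q0 \<in> T" "\<And>q. q \<in> T \<Longrightarrow> f q0 \<le> f q"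
        using arg_min_if_finite[OF \<open>finite T\<close>, of f] by (meson not_le)
      then have "q0 \<in> S \<inter> \<Inter>F'"
        using T by (auto simp: sublevel_def mem_epigraph)
      then show ?thesis by blast
    qed (use T \<open>S \<noteq> {}\<close> in auto)
  qed
  then show ?thesis
    using that by (auto simp: sublevel_def mem_epigraph)
qed

lemma closed_epigraph_add_continuous:
  fixes f g :: "'b::topological_space \<Rightarrow> real"
  assumes "closed (epigraph S f)" "continuous_on UNIV g"
  shows "closed (epigraph S (\<lambda>p. f p + g p))"
proof -
  have "epigraph S (\<lambda>p. f p + g p) = (\<lambda>(p, t). (p, t - g p)) -` epigraph S f"
    by (auto simp: epigraph_def le_diff_eq)
  moreover have "continuous_on UNIV (\<lambda>(p, t). (p, t - g p))"
    unfolding case_prod_unfold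
    by (intro continuous_intros continuous_on_compose2[OF assms(2)]) auto
  ultimately show ?thesis
    using closed_vimage[OF assms(1)] by simp
qed

lemma compact_act_simplex: "compact (act_simplex :: (real^'a::finite) set)"
  unfolding compact_eq_bounded_closed
proof
  show "bounded (act_simplex :: (real^'a) set)"
    unfolding bounded_iff
  proof (intro exI ballI)
    fix x :: "real^'a" assume "x \<in> act_simplex"
    then have "(\<Sum>i\<in>UNIV. \<bar>x $ i\<bar>) = 1" unfolding act_simplex_def by simp
    then show "norm x \<le> 1" using norm_le_l1_cart[of x] by simp
  qed
  show "closed (act_simplex :: (real^'a) set)"
    unfolding act_simplex_def
    by (intro closed_Collect_conj closed_Collect_all closed_Collect_le closed_Collect_eq continuous_intros)
qed

lemma act_simplex_nonempty: "(act_simplex :: (real^'a::finite) set) \<noteq> {}"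
proof -
  have "(\<chi> b. if b = a then 1 else 0) \<in> (act_simplex :: (real^'a) set)" for a :: 'a
    unfolding act_simplex_def by auto
  then show ?thesis by blast
qed

lemma nonneg_vec_eq_scaleR_act_simplex:
  fixes y :: "real^'a::finite"
  assumes "\<And>a. 0 \<le> y $ a"
  obtains u where "u \<in> act_simplex" "y = (\<Sum>a\<in>UNIV. y $ a) *\<^sub>R u"
proof (cases "(\<Sum>a\<in>UNIV. y $ a) = 0")
  case True
  then have "y = 0"
    using assms by (simp add: sum_nonneg_eq_0_iff vec_eq_iff)
  with True act_simplex_nonempty that show ?thesis by auto
next
  case False
  then have "inverse (\<Sum>a\<in>UNIV. y $ a) *\<^sub>R y \<in> act_simplex"
    using assms by (simp add: act_simplex_def sum_nonneg flip: sum_distrib_left)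
  with False that show ?thesis by simp
qed

lemma Xset_eq_scaled_policies:
  assumes "\<And>s. 0 \<le> eta P \<gamma> pol' rho s"
  shows "Xset P \<gamma> rho pol' = (\<lambda>u s. eta P \<gamma> pol' rho s *\<^sub>R u s) ` {u. is_policy u}"
proof
  show "(\<lambda>u s. eta P \<gamma> pol' rho s *\<^sub>R u s) ` {u. is_policy u} \<subseteq> Xset P \<gamma> rho pol'"
    using assms by (auto simp: Xset_def is_policy_def act_simplex_def simp flip: sum_distrib_left)
  show "Xset P \<gamma> rho pol' \<subseteq> (\<lambda>u s. eta P \<gamma> pol' rho s *\<^sub>R u s) ` {u. is_policy u}"
  proof
    fix x assume "x \<in> Xset P \<gamma> rho pol'"
    have "\<exists>u. u \<in> act_simplex \<and> x s = eta P \<gamma> pol' rho s *\<^sub>R u" for s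
    proof -
      have "\<And>a. 0 \<le> x s $ a" "(\<Sum>a\<in>UNIV. x s $ a) = eta P \<gamma> pol' rho s"
        using \<open>x \<in> Xset P \<gamma> rho pol'\<close> by (auto simp: Xset_def)
      then show ?thesis by (metis nonneg_vec_eq_scaleR_act_simplex)
    qed
    then obtain u where "\<And>s. u s \<in> act_simplex" "\<And>s. x s = eta P \<gamma> pol' rho s *\<^sub>R u s"
      by metis
    then show "x \<in> (\<lambda>u s. eta P \<gamma> pol' rho s *\<^sub>R u s) ` {u. is_policy u}"
      by (auto simp: is_policy_def image_iff)
  qed
qed

lemma psi_attains_min:
  assumes "closed_fun_on act_simplex (h s)"
  obtains p where "p \<in> act_simplex"
    "\<And>q. q \<in> act_simplex \<Longrightarrow> psi P c h \<gamma> pol s p \<le> psi P c h \<gamma> pol s q"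
proof (rule closed_epigraph_attains_min[OF _ compact_act_simplex act_simplex_nonempty])
  have psi_split: "psi P c h \<gamma> pol s = (\<lambda>p. h s p + ((\<Sum>a\<in>UNIV. Qfun P c h \<gamma> pol s a * p $ a)
      - Vfun P c h \<gamma> pol s - h s (pol s)))"
    by (auto simp: psi_def)
  show "closed (epigraph act_simplex (psi P c h \<gamma> pol s))"
    unfolding psi_split
    by (rule closed_epigraph_add_continuous[OF assms[unfolded closed_fun_on_iff_closed_epigraph]])
      (intro continuous_intros)
qed (use that in auto)

(* The factor e absorbs the junk value of hbar when x s = 0, where it evaluates h at 0 / 0 = 0. *)
lemma hbar_scaleR_act_simplex:
  assumes "u \<in> act_simplex" "x s = e *\<^sub>R u"
  shows "e * hbar h x s = e * h s u"
proof (cases "e = 0")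
  case False
  have "(\<chi> a. x s $ a / (\<Sum>b\<in>UNIV. x s $ b)) = u"
    using assms False by (simp add: act_simplex_def vec_eq_iff flip: sum_distrib_left)
  then show ?thesis unfolding hbar_def by simp
qed simp

lemma sum_flowT_eq:
  "(\<Sum>s\<in>UNIV. v s * flowT P \<gamma> x s)
    = (\<Sum>s\<in>UNIV. \<Sum>a\<in>UNIV. x s $ a * (v s - \<gamma> * (\<Sum>s'\<in>UNIV. P s a s' * v s')))"
proof -
  have "(\<Sum>s\<in>UNIV. v s * flowT P \<gamma> x s) = (\<Sum>s\<in>UNIV. v s * (\<Sum>a\<in>UNIV. x s $ a))
      - \<gamma> * (\<Sum>s\<in>UNIV. v s * (\<Sum>s'\<in>UNIV. \<Sum>a\<in>UNIV. P s' a s * x s' $ a))"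
    unfolding flowT_def by (simp add: right_diff_distrib sum_subtractf sum_distrib_left mult_ac)
  also have "(\<Sum>s\<in>UNIV. v s * (\<Sum>s'\<in>UNIV. \<Sum>a\<in>UNIV. P s' a s * x s' $ a))
      = (\<Sum>s'\<in>UNIV. \<Sum>a\<in>UNIV. x s' $ a * (\<Sum>s\<in>UNIV. P s' a s * v s))"
    unfolding sum_distrib_left sum_distrib_right
    by (subst sum.swap, rule sum.cong[OF refl], subst sum.swap) (simp add: mult_ac)
  finally show ?thesis
    by (simp add: right_diff_distrib sum_subtractf sum_distrib_left mult_ac)
qed

lemma summable_discounted_bounded:
  fixes \<gamma> :: real
  assumes "\<bar>\<gamma>\<bar> < 1" "\<And>t. \<bar>f t\<bar> \<le> K"
  shows "summable (\<lambda>t. \<gamma> ^ t * f t)"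
proof (rule summable_comparison_test)
  show "\<exists>N. \<forall>t\<ge>N. norm (\<gamma> ^ t * f t) \<le> K * \<bar>\<gamma>\<bar> ^ t"
    using assms(2) by (metis abs_ge_zero abs_mult mult.commute mult_left_mono power_abs real_norm_def)
  show "summable (\<lambda>t. K * \<bar>\<gamma>\<bar> ^ t)"
    using assms(1) by (intro summable_mult summable_geometric) simp
qed

locale discounted_mdp =
  fixes P :: "'s::finite \<Rightarrow> 'a::finite \<Rightarrow> 's \<Rightarrow> real" and \<gamma> :: real
  assumes P_nonneg: "\<And>s a s'. 0 \<le> P s a s'"
    and P_sum: "\<And>s a. (\<Sum>s'\<in>UNIV. P s a s') = 1"
    and gamma_nonneg: "0 \<le> \<gamma>" and gamma_less_1: "\<gamma> < 1"
begin

lemma Ppol_nonneg: "is_policy pol \<Longrightarrow> 0 \<le> Ppol P pol s s'"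
  unfolding Ppol_def is_policy_def act_simplex_def
  by (auto intro!: sum_nonneg mult_nonneg_nonneg P_nonneg)

lemma Ppol_sum: "is_policy pol \<Longrightarrow> (\<Sum>s'\<in>UNIV. Ppol P pol s s') = 1"
  unfolding Ppol_def is_policy_def act_simplex_def
  by (subst sum.swap) (simp add: P_sum flip: sum_distrib_left)

lemma pstep_stochastic:
  assumes "is_policy pol"
  shows "(\<forall>s'. 0 \<le> pstep P pol t s s') \<and> (\<Sum>s'\<in>UNIV. pstep P pol t s s') = 1"
proof (induction t)
  case (Suc t)
  have "(\<Sum>s'\<in>UNIV. pstep P pol (Suc t) s s')
      = (\<Sum>s1\<in>UNIV. pstep P pol t s s1 * (\<Sum>s'\<in>UNIV. Ppol P pol s1 s'))"
    by (simp add: sum_distrib_left) (rule sum.swap)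
  with Suc show ?case
    using Ppol_nonneg[OF assms] Ppol_sum[OF assms]
    by (auto intro!: sum_nonneg mult_nonneg_nonneg)
qed simp

lemma pstep_bounds:
  assumes "is_policy pol"
  shows "0 \<le> pstep P pol t s s'" "pstep P pol t s s' \<le> 1"
proof -
  note stochastic = pstep_stochastic[OF assms, of t s]
  then show "0 \<le> pstep P pol t s s'" by simp
  have "pstep P pol t s s' \<le> (\<Sum>s'\<in>UNIV. pstep P pol t s s')"
    by (rule member_le_sum) (use stochastic in auto)
  with stochastic show "pstep P pol t s s' \<le> 1" by simp
qed

lemma summable_discounted_expectation:
  assumes "is_policy pol"
  shows "summable (\<lambda>t. \<gamma> ^ t * (\<Sum>s'\<in>UNIV. pstep P pol t s s' * f s'))"
proof (rule summable_discounted_bounded)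
  show "\<bar>\<gamma>\<bar> < 1" using gamma_nonneg gamma_less_1 by simp
  fix t
  have "\<bar>\<Sum>s'\<in>UNIV. pstep P pol t s s' * f s'\<bar> \<le> (\<Sum>s'\<in>UNIV. \<bar>pstep P pol t s s' * f s'\<bar>)"
    by (rule sum_abs)
  also have "\<dots> \<le> (\<Sum>s'\<in>UNIV. \<bar>f s'\<bar>)"
    using pstep_bounds[OF assms]
    by (intro sum_mono) (simp add: abs_mult mult_left_le_one_le)
  finally show "\<bar>\<Sum>s'\<in>UNIV. pstep P pol t s s' * f s'\<bar> \<le> (\<Sum>s'\<in>UNIV. \<bar>f s'\<bar>)" .
qed

lemma Qfun_Bellman:
  assumes "is_policy pol"
  shows "Qfun P c h \<gamma> pol s a
    = c s a + h s (pol s) + \<gamma> * (\<Sum>s1\<in>UNIV. P s a s1 * Vfun P c h \<gamma> pol s1)"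
proof -
  define A where "A t s1 = \<gamma> ^ t * (\<Sum>s'\<in>UNIV. pstep P pol t s1 s' * cpol c h pol s')" for t s1
  have summable_A: "summable (\<lambda>t. A t s1)" for s1
    unfolding A_def by (rule summable_discounted_expectation[OF assms])
  have first_step: "\<gamma> ^ Suc t * (\<Sum>s'\<in>UNIV. (\<Sum>s1\<in>UNIV. P s a s1 * pstep P pol t s1 s') * cpol c h pol s')
      = (\<Sum>s1\<in>UNIV. \<gamma> * P s a s1 * A t s1)" for t
    unfolding A_def sum_distrib_right sum_distrib_left
    by (subst sum.swap) (simp add: mult_ac)
  have "(\<Sum>t. \<gamma> ^ Suc t * (\<Sum>s'\<in>UNIV. (\<Sum>s1\<in>UNIV. P s a s1 * pstep P pol t s1 s') * cpol c h pol s'))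
      = (\<Sum>t. \<Sum>s1\<in>UNIV. \<gamma> * P s a s1 * A t s1)"
    by (simp only: first_step)
  also have "\<dots> = (\<Sum>s1\<in>UNIV. \<gamma> * P s a s1 * (\<Sum>t. A t s1))"
    using summable_A by (simp add: suminf_sum summable_mult suminf_mult)
  also have "\<dots> = \<gamma> * (\<Sum>s1\<in>UNIV. P s a s1 * Vfun P c h \<gamma> pol s1)"
    unfolding A_def Vfun_def by (simp add: sum_distrib_left mult_ac)
  finally show ?thesis unfolding Qfun_def by simp
qed

lemma eta_nonneg:
  assumes "is_policy pol" "is_distribution rho"
  shows "0 \<le> eta P \<gamma> pol rho s"
proof -
  have "0 \<le> kappa P \<gamma> pol q s" for q
  proof -
    have "summable (\<lambda>t. \<gamma> ^ t * pstep P pol t q s)"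
      using pstep_bounds[OF assms(1)] gamma_nonneg gamma_less_1
      by (intro summable_discounted_bounded[where K = 1]) auto
    then have "0 \<le> (\<Sum>t. \<gamma> ^ t * pstep P pol t q s)"
      using pstep_bounds[OF assms(1)] gamma_nonneg by (intro suminf_nonneg) auto
    then show ?thesis unfolding kappa_def using gamma_less_1 by simp
  qed
  then show ?thesis
    using assms(2) gamma_less_1 unfolding eta_def is_distribution_def
    by (auto intro!: mult_nonneg_nonneg sum_nonneg)
qed

lemma state_term_eq_psi:
  assumes "is_policy pol" "u \<in> act_simplex" "x s = e *\<^sub>R u"
  shows "(\<Sum>a\<in>UNIV. x s $ a * (c s a + \<gamma> * (\<Sum>s'\<in>UNIV. P s a s' * Vfun P c h \<gamma> pol s')
            - Vfun P c h \<gamma> pol s)) + e * hbar h x s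
         = e * psi P c h \<gamma> pol s u"
proof -
  define V where "V = Vfun P c h \<gamma> pol"
  define Q where "Q = Qfun P c h \<gamma> pol"
  have "x s $ a * (c s a + \<gamma> * (\<Sum>s'\<in>UNIV. P s a s' * V s') - V s)
      = e * (Q s a * u $ a) - e * (h s (pol s) + V s) * u $ a" for a
    unfolding Q_def V_def Qfun_Bellman[OF assms(1)] using assms(3) by (simp add: algebra_simps)
  then have "(\<Sum>a\<in>UNIV. x s $ a * (c s a + \<gamma> * (\<Sum>s'\<in>UNIV. P s a s' * V s') - V s))
      = e * (\<Sum>a\<in>UNIV. Q s a * u $ a) - e * (h s (pol s) + V s) * (\<Sum>a\<in>UNIV. u $ a)"
    by (simp add: sum_subtractf sum_distrib_left)
  also have "\<dots> = e * ((\<Sum>a\<in>UNIV. Q s a * u $ a) - h s (pol s) - V s)"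
    using assms(2) by (simp add: act_simplex_def algebra_simps)
  finally show ?thesis
    unfolding hbar_scaleR_act_simplex[where x = x and s = s, OF assms(2,3)] psi_def
    by (simp add: V_def Q_def algebra_simps)
qed

lemma Lag_Vfun_eq_sum_psi:
  assumes "is_policy pol" "\<And>s. u s \<in> act_simplex" "\<And>s. x s = eta P \<gamma> pol' rho s *\<^sub>R u s"
  shows "Lag P c h \<gamma> rho pol' x (Vfun P c h \<gamma> pol)
    = (\<Sum>s\<in>UNIV. Vfun P c h \<gamma> pol s * rho s)
      + (\<Sum>s\<in>UNIV. eta P \<gamma> pol' rho s * psi P c h \<gamma> pol s (u s))"
proof -
  define V where "V = Vfun P c h \<gamma> pol"
  define E where "E = eta P \<gamma> pol' rho"
  have "Lag P c h \<gamma> rho pol' x V = (\<Sum>s\<in>UNIV. V s * rho s)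
      + (\<Sum>s\<in>UNIV. (\<Sum>a\<in>UNIV. x s $ a * (c s a + \<gamma> * (\<Sum>s'\<in>UNIV. P s a s' * V s') - V s))
                     + E s * hbar h x s)"
    unfolding Lag_def cx_def E_def right_diff_distrib sum_subtractf sum_flowT_eq
    by (simp add: algebra_simps sum.distrib sum_subtractf)
  also have "\<dots> = (\<Sum>s\<in>UNIV. V s * rho s) + (\<Sum>s\<in>UNIV. E s * psi P c h \<gamma> pol s (u s))"
    unfolding V_def E_def by (intro arg_cong2[where f = "(+)"] refl sum.cong state_term_eq_psi assms)
  finally show ?thesis unfolding V_def E_def .
qed

lemma Lunder_Vfun_eq_min_psi:
  assumes "is_policy pol" "is_policy pol'" "is_distribution rho" "is_policy pmin"
    and pmin: "\<And>s q. q \<in> act_simplex \<Longrightarrow> psi P c h \<gamma> pol s (pmin s) \<le> psi P c h \<gamma> pol s q"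
  shows "Lunder P c h \<gamma> rho pol' (Vfun P c h \<gamma> pol)
    = (\<Sum>s\<in>UNIV. Vfun P c h \<gamma> pol s * rho s)
      + (\<Sum>s\<in>UNIV. eta P \<gamma> pol' rho s * psi P c h \<gamma> pol s (pmin s))"
proof -
  define V where "V = Vfun P c h \<gamma> pol"
  define E where "E = eta P \<gamma> pol' rho"
  define M where "M u = (\<Sum>s\<in>UNIV. V s * rho s) + (\<Sum>s\<in>UNIV. E s * psi P c h \<gamma> pol s (u s))" for u
  have E_nonneg: "0 \<le> E s" for s
    unfolding E_def using eta_nonneg assms(2,3) .
  have "Lunder P c h \<gamma> rho pol' V = (INF u\<in>{u. is_policy u}. Lag P c h \<gamma> rho pol' (\<lambda>s. E s *\<^sub>R u s) V)"
    unfolding Lunder_def Xset_eq_scaled_policies[OF E_nonneg[unfolded E_def]] image_image E_def ..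
  also have "\<dots> = (INF u\<in>{u. is_policy u}. M u)"
    unfolding M_def V_def E_def
    by (intro INF_cong refl Lag_Vfun_eq_sum_psi assms(1)) (auto simp: is_policy_def)
  also have "\<dots> = M pmin"
  proof (rule cInf_eq_minimum)
    show "M pmin \<in> M ` {u. is_policy u}" using assms(4) by blast
    fix m assume "m \<in> M ` {u. is_policy u}"
    then obtain u where "is_policy u" "m = M u" by blast
    then show "M pmin \<le> m"
      unfolding M_def is_policy_def using pmin E_nonneg by (auto intro!: sum_mono mult_left_mono)
  qed
  finally show ?thesis unfolding M_def V_def E_def .
qed

end

theorem lemma2p6:
  fixes P :: "'s::finite \<Rightarrow> 'a::finite \<Rightarrow> 's \<Rightarrow> real"
    and c :: "'s \<Rightarrow> 'a \<Rightarrow> real"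
    and h :: "'s \<Rightarrow> real^'a \<Rightarrow> real"
    and \<gamma> :: real
    and rho :: "'s \<Rightarrow> real"
    and pol pol' :: "'s \<Rightarrow> real^'a"
  assumes gamma: "0 \<le> \<gamma>" "\<gamma> < 1"
    and P_nonneg: "\<And>s a s'. 0 \<le> P s a s'"
    and P_sum: "\<And>s a. (\<Sum>s'\<in>UNIV. P s a s') = 1"
    and h_convex: "\<And>s. convex_on act_simplex (h s)"
    and h_closed: "\<And>s. closed_fun_on act_simplex (h s)"
    and rho: "is_distribution rho"
    and pol: "is_policy pol"
    and pol': "is_policy pol'"
  shows "Lunder P c h \<gamma> rho pol' (Vfun P c h \<gamma> pol)
         = (\<Sum>s\<in>UNIV. Vfun P c h \<gamma> pol s * rho s)
           - (\<Sum>s\<in>UNIV. eta P \<gamma> pol' rho s *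
                (SUP p\<in>act_simplex. - psi P c h \<gamma> pol s p))"
proof -
  interpret discounted_mdp P \<gamma>
    using gamma P_nonneg P_sum by unfold_locales
  have "\<exists>p\<in>act_simplex. \<forall>q\<in>act_simplex. psi P c h \<gamma> pol s p \<le> psi P c h \<gamma> pol s q" for s
    by (rule psi_attains_min[where h = h and s = s, OF h_closed]) blast
  then obtain pmin where pmin_simplex: "\<And>s. pmin s \<in> act_simplex"
    and pmin_min: "\<And>s q. q \<in> act_simplex \<Longrightarrow> psi P c h \<gamma> pol s (pmin s) \<le> psi P c h \<gamma> pol s q"
    by metis
  have "is_policy pmin"
    using pmin_simplex by (simp add: is_policy_def)
  note Lunder_eq = Lunder_Vfun_eq_min_psi[OF pol pol' rho this pmin_min]
  have "(SUP p\<in>act_simplex. - psi P c h \<gamma> pol s p) = - psi P c h \<gamma> pol s (pmin s)" for s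
  proof (rule cSup_eq_maximum)
    show "- psi P c h \<gamma> pol s (pmin s) \<in> (\<lambda>p. - psi P c h \<gamma> pol s p) ` act_simplex"
      using pmin_simplex by blast
  qed (use pmin_min in force)
  then show ?thesis
    using Lunder_eq by (simp add: sum_negf)
qed

end
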